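(* Let $L$ be a lattice. Then the following are equivalent: (i) $L$ has permutable congruences; (ii) for all elements $a,b,c\in L$ with $a\leq c\leq b$, there exists $x\in L$ such that $a\equiv_{\Theta(c,b)}x$ and $x\equiv_{\Theta(a,c)}b$.
   Context: For binary relations $\alpha,\beta$ on a set $A$, $\alpha\beta=\{(x,y)\in A\times A : \exists z\in A,\ (x,z)\in\alpha \text{ and } (z,y)\in\beta\}$. We write $x\equiv_\alpha y$ for $(x,y)\in\alpha$. For a lattice $L$ and $x,y\in L$, $\Theta(x,y)=\Theta_L(x,y)$ denotes the least congruence of $L$ identifying $x$ and $y$. A lattice $L$ has permutable congruences if $\alpha\beta=\beta\alpha$ for all congruences $\alpha,\beta$ of $L$. *)

theory Defs
  imports Main
begin

definition lattice_congruence :: "('a::lattice) rel \<Rightarrow> bool" where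
  "lattice_congruence \<theta> \<longleftrightarrow> equiv UNIV \<theta> \<and>
     (\<forall>x y u v. (x, y) \<in> \<theta> \<longrightarrow> (u, v) \<in> \<theta> \<longrightarrow>
        (sup x u, sup y v) \<in> \<theta> \<and> (inf x u, inf y v) \<in> \<theta>)"

definition Theta :: "'a::lattice \<Rightarrow> 'a \<Rightarrow> 'a rel" where
  "Theta x y = \<Inter> {\<theta>. lattice_congruence \<theta> \<and> (x, y) \<in> \<theta>}"

text \<open>Permutable congruences; relational product alpha O beta is the
  composition alpha beta of the paper.\<close>

definition permutable_congruences :: "'a::lattice itself \<Rightarrow> bool" where
  "permutable_congruences _ \<longleftrightarrow>
     (\<forall>\<alpha> \<beta> :: 'a rel. lattice_congruence \<alpha> \<longrightarrow> lattice_congruence \<beta> \<longrightarrow>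
        \<alpha> O \<beta> = \<beta> O \<alpha>)"

end

theory Submission
  imports Defs
begin

text \<open>Condition (ii) says exactly that an ascending step a \<le> c \<le> b, first in \<Theta>(a,c) and then
  in \<Theta>(c,b), can be taken in the opposite order; as \<Theta>(a,c) \<subseteq> \<alpha> and \<Theta>(c,b) \<subseteq> \<beta>
  whenever (a,c) \<in> \<alpha> and (c,b) \<in> \<beta>, the same then holds for all congruences \<alpha>, \<beta>.
  An arbitrary pair u \<alpha> z \<beta> v is reduced to two ascending steps towards s = u \<squnion> z \<squnion> v:
  from u \<alpha> u \<squnion> z \<beta> s and v \<beta> z \<squnion> v \<alpha> s one gets u \<beta> x \<alpha> s and v \<alpha> w \<beta> s,
  and then u \<beta> x \<sqinter> w \<alpha> v.\<close>

lemma lattice_congruence_refl: "lattice_congruence \<theta> \<Longrightarrow> (x, x) \<in> \<theta>"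
  unfolding lattice_congruence_def equiv_def refl_on_def by blast

lemma lattice_congruence_sym: "lattice_congruence \<theta> \<Longrightarrow> (x, y) \<in> \<theta> \<Longrightarrow> (y, x) \<in> \<theta>"
  unfolding lattice_congruence_def equiv_def sym_def by blast

lemma lattice_congruence_trans:
  "lattice_congruence \<theta> \<Longrightarrow> (x, y) \<in> \<theta> \<Longrightarrow> (y, z) \<in> \<theta> \<Longrightarrow> (x, z) \<in> \<theta>"
  unfolding lattice_congruence_def equiv_def trans_def by blast

lemma lattice_congruence_sup:
  "lattice_congruence \<theta> \<Longrightarrow> (x, y) \<in> \<theta> \<Longrightarrow> (u, v) \<in> \<theta> \<Longrightarrow> (sup x u, sup y v) \<in> \<theta>"
  unfolding lattice_congruence_def by blast

lemma lattice_congruence_inf: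
  "lattice_congruence \<theta> \<Longrightarrow> (x, y) \<in> \<theta> \<Longrightarrow> (u, v) \<in> \<theta> \<Longrightarrow> (inf x u, inf y v) \<in> \<theta>"
  unfolding lattice_congruence_def by blast

lemma lattice_congruence_Inter:
  assumes "\<And>\<theta>. \<theta> \<in> \<Theta>s \<Longrightarrow> lattice_congruence \<theta>"
  shows "lattice_congruence (\<Inter> \<Theta>s)"
proof -
  have "equiv UNIV (\<Inter> \<Theta>s)"
  proof (rule equivI)
    show "\<Inter> \<Theta>s \<subseteq> UNIV \<times> UNIV" by simp
    show "refl (\<Inter> \<Theta>s)"
      using assms lattice_congruence_refl by (auto simp: refl_on_def)
    show "sym (\<Inter> \<Theta>s)"
      using assms lattice_congruence_sym unfolding sym_def by blast
    show "trans (\<Inter> \<Theta>s)"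
      using assms lattice_congruence_trans unfolding trans_def by blast
  qed
  moreover have "(sup x u, sup y v) \<in> \<Inter> \<Theta>s" "(inf x u, inf y v) \<in> \<Inter> \<Theta>s"
    if "(x, y) \<in> \<Inter> \<Theta>s" "(u, v) \<in> \<Inter> \<Theta>s" for x y u v
    using that assms lattice_congruence_sup lattice_congruence_inf by blast+
  ultimately show ?thesis
    unfolding lattice_congruence_def by blast
qed

lemma lattice_congruence_Theta: "lattice_congruence (Theta x y)"
  unfolding Theta_def by (rule lattice_congruence_Inter) blast

lemma Theta_pair: "(x, y) \<in> Theta x y"
  unfolding Theta_def by blast

lemma Theta_least: "lattice_congruence \<theta> \<Longrightarrow> (x, y) \<in> \<theta> \<Longrightarrow> Theta x y \<subseteq> \<theta>"
  unfolding Theta_def by blast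

definition upward_permutable :: "('a::lattice) rel \<Rightarrow> 'a rel \<Rightarrow> bool" where
  "upward_permutable \<alpha> \<beta> \<longleftrightarrow>
     (\<forall>a b c. a \<le> c \<longrightarrow> c \<le> b \<longrightarrow> (a, c) \<in> \<alpha> \<longrightarrow> (c, b) \<in> \<beta> \<longrightarrow> (a, b) \<in> \<beta> O \<alpha>)"

lemma upward_permutable_if_Theta_permutable:
  fixes \<alpha> \<beta> :: "('a::lattice) rel"
  assumes "\<forall>a b c :: 'a. a \<le> c \<and> c \<le> b \<longrightarrow> (\<exists>x. (a, x) \<in> Theta c b \<and> (x, b) \<in> Theta a c)"
    and "lattice_congruence \<alpha>" "lattice_congruence \<beta>"
  shows "upward_permutable \<alpha> \<beta>"
  unfolding upward_permutable_def
proof (intro allI impI)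
  fix a b c :: 'a
  assume "a \<le> c" "c \<le> b" "(a, c) \<in> \<alpha>" "(c, b) \<in> \<beta>"
  then obtain x where "(a, x) \<in> Theta c b" "(x, b) \<in> Theta a c"
    using assms(1) by blast
  with \<open>(a, c) \<in> \<alpha>\<close> \<open>(c, b) \<in> \<beta>\<close> show "(a, b) \<in> \<beta> O \<alpha>"
    using Theta_least assms(2,3) by blast
qed

lemma relcomp_subset_if_upward_permutable:
  assumes \<alpha>: "lattice_congruence \<alpha>" and \<beta>: "lattice_congruence \<beta>"
    and "upward_permutable \<alpha> \<beta>" "upward_permutable \<beta> \<alpha>"
  shows "\<alpha> O \<beta> \<subseteq> \<beta> O \<alpha>"
proof
  fix p assume "p \<in> \<alpha> O \<beta>"
  then obtain u z v where p: "p = (u, v)" and uz: "(u, z) \<in> \<alpha>" and zv: "(z, v) \<in> \<beta>"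
    by blast
  define s where "s = sup u (sup z v)"
  have "(sup u u, sup u z) \<in> \<alpha>"
    using lattice_congruence_sup[OF \<alpha> lattice_congruence_refl[OF \<alpha>] uz] .
  then have "(u, sup u z) \<in> \<alpha>" by simp
  moreover have "(sup u z, s) \<in> \<beta>"
    unfolding s_def
    using lattice_congruence_sup[OF \<beta> lattice_congruence_refl[OF \<beta>, of u]
        lattice_congruence_sup[OF \<beta> lattice_congruence_refl[OF \<beta>, of z] zv]]
    by simp
  moreover have "u \<le> sup u z" "sup u z \<le> s"
    by (auto simp: s_def intro: le_supI2)
  ultimately obtain x where ux: "(u, x) \<in> \<beta>" and xs: "(x, s) \<in> \<alpha>"
    using \<open>upward_permutable \<alpha> \<beta>\<close> unfolding upward_permutable_def by blast
  have "(sup v v, sup v z) \<in> \<beta>"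
    using lattice_congruence_sup[OF \<beta> lattice_congruence_refl[OF \<beta>] lattice_congruence_sym[OF \<beta> zv]] .
  then have "(v, sup z v) \<in> \<beta>" by (simp add: sup_commute)
  moreover have "(sup z v, s) \<in> \<alpha>"
    using lattice_congruence_sup[OF \<alpha> lattice_congruence_sym[OF \<alpha> uz]
        lattice_congruence_refl[OF \<alpha>, of "sup z v"]]
    by (simp add: s_def)
  moreover have "v \<le> sup z v" "sup z v \<le> s"
    by (auto simp: s_def)
  ultimately obtain w where vw: "(v, w) \<in> \<alpha>" and ws: "(w, s) \<in> \<beta>"
    using \<open>upward_permutable \<beta> \<alpha>\<close> unfolding upward_permutable_def by blast
  have "(inf x w, inf s v) \<in> \<alpha>"
    using lattice_congruence_inf[OF \<alpha> xs lattice_congruence_sym[OF \<alpha> vw]] .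
  moreover have "inf s v = v" unfolding s_def by (intro inf_absorb2 le_supI2 sup_ge2)
  ultimately have "(inf x w, v) \<in> \<alpha>" by simp
  moreover have "(inf u s, inf x w) \<in> \<beta>"
    using lattice_congruence_inf[OF \<beta> ux lattice_congruence_sym[OF \<beta> ws]] .
  moreover have "inf u s = u" by (simp add: s_def inf_absorb1)
  ultimately show "p \<in> \<beta> O \<alpha>"
    unfolding p by auto
qed

theorem proposition1p1:
  shows "permutable_congruences TYPE('a::lattice) \<longleftrightarrow>
    (\<forall>a b c :: 'a. a \<le> c \<and> c \<le> b \<longrightarrow>
       (\<exists>x. (a, x) \<in> Theta c b \<and> (x, b) \<in> Theta a c))"
    (is "_ \<longleftrightarrow> ?Theta_permutable")
proof
  assume "permutable_congruences TYPE('a)"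
  then have "Theta a c O Theta c b = Theta c b O Theta a c" for a b c :: 'a
    unfolding permutable_congruences_def using lattice_congruence_Theta by blast
  moreover have "(a, b) \<in> Theta a c O Theta c b" for a b c :: 'a
    using Theta_pair by blast
  ultimately show ?Theta_permutable by blast
next
  assume ?Theta_permutable
  then have "\<alpha> O \<beta> \<subseteq> \<beta> O \<alpha>" if "lattice_congruence \<alpha>" "lattice_congruence \<beta>"
    for \<alpha> \<beta> :: "'a rel"
    by (intro relcomp_subset_if_upward_permutable upward_permutable_if_Theta_permutable that)
  then show "permutable_congruences TYPE('a)"
    unfolding permutable_congruences_def by blast
qed

end
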